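(* Let $X$ be a real or complex Banach space, $(A(n))_{n\in\mathbb{N}}$ a sequence in $\mathcal{B}(X)$, and $P:\mathbb{N}\to\mathcal{B}(X)$ a family of projections compatible with the system $x_{n+1}=A(n)x_n$, with complementary family $Q(n)=I-P(n)$. Then the system is $P$-exponentially dichotomic if and only if there exist constants $D\ge1$, $d>0$ and $c\ge0$ such that \[ \sum_{j=n}^{\infty}e^{d(j-n)}\|\mathcal{A}_P(j,p)x\|+\sum_{k=n}^{m}e^{d(m-k)}\|\mathcal{A}_Q(k,n)x\|\le D\big(e^{cn}\|\mathcal{A}_P(n,p)x\|+e^{cm}\|\mathcal{A}_Q(m,n)x\|\big) \] for all $(m,n,p)\in T$ and all $x\in X$.
   Context: $\mathbb{N}$ denotes the set of positive integers; $\mathcal{B}(X)$ is the Banach algebra of bounded linear operators on $X$, and $I$ is the identity operator. $\Delta=\{(m,n)\in\mathbb{N}^2: m\ge n\}$ and $T=\{(m,n,p)\in\mathbb{N}^3: m\ge n\ge p\}$. A family of projections is a map $P:\mathbb{N}\to\mathcal{B}(X)$ with $P(n)^2=P(n)$ for all $n$; its complementary family is $Q(n)=I-P(n)$. $P$ is compatible with the system $x_{n+1}=A(n)x_n$ if $A(n+1)P(n)=P(n+1)A(n+1)$ for all $n\in\mathbb{N}$. For $(m,n)\in\Delta$ define $\mathcal{A}_P(m,n)=A(m)\cdots A(n+1)P(n)$ if $m>n$ and $\mathcal{A}_P(n,n)=P(n)$; similarly $\mathcal{A}_Q(m,n)=A(m)\cdots A(n+1)Q(n)$ if $m>n$ and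 $\mathcal{A}_Q(n,n)=Q(n)$. The system is $P$-exponentially dichotomic if there exist constants $N\ge1$, $\alpha>0$ and $\beta\ge0$ such that $e^{\alpha(m-n)}\big(\|\mathcal{A}_P(m,n)x\|+\|Q(n)x\|\big)\le N\big(e^{\beta n}\|P(n)x\|+e^{\beta m}\|\mathcal{A}_Q(m,n)x\|\big)$ for all $(m,n)\in\Delta$, $x\in X$. *)

theory Defs
  imports "HOL-Analysis.Analysis"
begin

fun evol :: "(nat \<Rightarrow> 'a::real_normed_vector \<Rightarrow>\<^sub>L 'a) \<Rightarrow> nat \<Rightarrow> nat \<Rightarrow> 'a \<Rightarrow>\<^sub>L 'a" where
  "evol A n 0 = id_blinfun"
| "evol A n (Suc k) = A (n + Suc k) o\<^sub>L evol A n k"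

definition compl_fam :: "(nat \<Rightarrow> 'a::real_normed_vector \<Rightarrow>\<^sub>L 'a) \<Rightarrow> nat \<Rightarrow> 'a \<Rightarrow>\<^sub>L 'a" where
  "compl_fam P n = id_blinfun - P n"

text \<open>A_P(m,n) = A(m) ... A(n+1) P(n) for m > n, and P(n) for m = n (intended for m \<ge> n).\<close>
definition cocycleP :: "(nat \<Rightarrow> 'a::real_normed_vector \<Rightarrow>\<^sub>L 'a) \<Rightarrow> (nat \<Rightarrow> 'a \<Rightarrow>\<^sub>L 'a) \<Rightarrow> nat \<Rightarrow> nat \<Rightarrow> 'a \<Rightarrow>\<^sub>L 'a" where
  "cocycleP A P m n = evol A n (m - n) o\<^sub>L P n"

definition proj_family :: "(nat \<Rightarrow> 'a::real_normed_vector \<Rightarrow>\<^sub>L 'a) \<Rightarrow> bool" where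
  "proj_family P \<longleftrightarrow> (\<forall>n\<ge>1. P n o\<^sub>L P n = P n)"

definition compatible :: "(nat \<Rightarrow> 'a::real_normed_vector \<Rightarrow>\<^sub>L 'a) \<Rightarrow> (nat \<Rightarrow> 'a \<Rightarrow>\<^sub>L 'a) \<Rightarrow> bool" where
  "compatible A P \<longleftrightarrow> (\<forall>n\<ge>1. A (n + 1) o\<^sub>L P n = P (n + 1) o\<^sub>L A (n + 1))"

definition P_exp_dichotomic :: "(nat \<Rightarrow> 'a::real_normed_vector \<Rightarrow>\<^sub>L 'a) \<Rightarrow> (nat \<Rightarrow> 'a \<Rightarrow>\<^sub>L 'a) \<Rightarrow> bool" where
  "P_exp_dichotomic A P \<longleftrightarrow>
    (\<exists>N \<alpha> \<beta>::real. N \<ge> 1 \<and> \<alpha> > 0 \<and> \<beta> \<ge> 0 \<and>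
      (\<forall>m n x. 1 \<le> n \<and> n \<le> m \<longrightarrow>
         exp (\<alpha> * (real m - real n)) * (norm (cocycleP A P m n x) + norm (compl_fam P n x))
         \<le> N * (exp (\<beta> * real n) * norm (P n x) + exp (\<beta> * real m) * norm (cocycleP A (compl_fam P) m n x))))"

end

theory Submission
  imports Defs
begin

text \<open>On a vector lying in P(n)X or Q(n)X one side of the dichotomy inequality vanishes,
leaving decay at rate \<alpha> of the stable part forward in time and of the unstable part backward
in time. Weighted by exp (d t) with d < \<alpha>, both become geometric series of ratio
exp (d - \<alpha>) < 1, which yields the summed estimate. Conversely, the term j = m of the series
and the term k = n of the finite sum already give the dichotomy inequality, with the same
constants.\<close>

definition dichotomy_estimate ::
  "(nat \<Rightarrow> 'a::real_normed_vector \<Rightarrow>\<^sub>L 'a) \<Rightarrow> (nat \<Rightarrow> 'a \<Rightarrow>\<^sub>L 'a) \<Rightarrow> real \<Rightarrow> real \<Rightarrow> real \<Rightarrow> bool"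
  where "dichotomy_estimate A P N \<alpha> \<beta> \<longleftrightarrow>
    (\<forall>m n x. 1 \<le> n \<and> n \<le> m \<longrightarrow>
       exp (\<alpha> * (real m - real n)) * (norm (cocycleP A P m n x) + norm (compl_fam P n x))
       \<le> N * (exp (\<beta> * real n) * norm (P n x) + exp (\<beta> * real m) * norm (cocycleP A (compl_fam P) m n x)))"

definition summed_dichotomy_estimate ::
  "(nat \<Rightarrow> 'a::real_normed_vector \<Rightarrow>\<^sub>L 'a) \<Rightarrow> (nat \<Rightarrow> 'a \<Rightarrow>\<^sub>L 'a) \<Rightarrow> real \<Rightarrow> real \<Rightarrow> real \<Rightarrow> bool"
  where "summed_dichotomy_estimate A P D d c \<longleftrightarrow>
    (\<forall>m n p x. 1 \<le> p \<and> p \<le> n \<and> n \<le> m \<longrightarrow>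
       summable (\<lambda>i. exp (d * real i) * norm (cocycleP A P (n + i) p x)) \<and>
       (\<Sum>i. exp (d * real i) * norm (cocycleP A P (n + i) p x))
       + (\<Sum>k=n..m. exp (d * (real m - real k)) * norm (cocycleP A (compl_fam P) k n x))
       \<le> D * (exp (c * real n) * norm (cocycleP A P n p x)
              + exp (c * real m) * norm (cocycleP A (compl_fam P) m n x)))"

lemma dichotomy_estimateD:
  assumes "dichotomy_estimate A P N \<alpha> \<beta>" "1 \<le> n" "n \<le> m"
  shows "exp (\<alpha> * (real m - real n)) * (norm (cocycleP A P m n x) + norm (compl_fam P n x))
    \<le> N * (exp (\<beta> * real n) * norm (P n x) + exp (\<beta> * real m) * norm (cocycleP A (compl_fam P) m n x))"
  using assms unfolding dichotomy_estimate_def by blast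

lemma evol_add: "evol A n (j + k) x = evol A (n + j) k (evol A n j x)"
  by (induction k) (auto simp: add.assoc)

lemma compatibleD:
  assumes "compatible A P" "1 \<le> n"
  shows "A (n + 1) (P n x) = P (n + 1) (A (n + 1) x)"
  using assms unfolding compatible_def by (metis blinfun_apply_blinfun_compose)

lemma evol_commute_proj:
  assumes "compatible A P" "1 \<le> n"
  shows "evol A n k (P n x) = P (n + k) (evol A n k x)"
  by (induction k) (use compatibleD[OF assms(1), of "n + _"] assms(2) in auto)

lemma proj_family_idem:
  assumes "proj_family P" "1 \<le> n"
  shows "P n (P n x) = P n x"
  using assms unfolding proj_family_def by (metis blinfun_apply_blinfun_compose)

lemma compl_fam_apply: "compl_fam P n x = x - P n x"
  by (simp add: compl_fam_def blinfun.diff_left)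

lemma compl_fam_compl_fam: "compl_fam (compl_fam P) = P"
  by (simp add: fun_eq_iff compl_fam_def)

lemma compl_fam_proj_zero:
  assumes "proj_family P" "1 \<le> n"
  shows "compl_fam P n (P n x) = 0"
  using proj_family_idem[OF assms] by (simp add: compl_fam_apply)

lemma proj_family_compl_fam:
  assumes "proj_family P"
  shows "proj_family (compl_fam P)"
  unfolding proj_family_def
  using compl_fam_proj_zero[OF assms]
  by (auto intro!: blinfun_eqI simp: compl_fam_apply blinfun.diff_right)

lemma compatible_compl_fam:
  assumes "compatible A P"
  shows "compatible A (compl_fam P)"
  unfolding compatible_def
  by (auto intro!: blinfun_eqI simp: compl_fam_apply blinfun.diff_right compatibleD[OF assms, simplified])

lemma cocycleP_self: "cocycleP A P n n = P n"
  by (auto intro!: blinfun_eqI simp: cocycleP_def)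

lemma cocycleP_in_range:
  assumes "proj_family P" "compatible A P" "1 \<le> n" "n \<le> m"
  shows "P m (cocycleP A P m n x) = cocycleP A P m n x"
  using evol_commute_proj[OF assms(2,3), of "m - n" "P n x"] proj_family_idem[OF assms(1,3)] assms(4)
  by (simp add: cocycleP_def)

lemma cocycleP_trans:
  assumes "proj_family P" "compatible A P" "1 \<le> p" "p \<le> n" "n \<le> m"
  shows "cocycleP A P m n (cocycleP A P n p x) = cocycleP A P m p x"
  using evol_add[of A p "n - p" "m - n" "P p x"] cocycleP_in_range[OF assms(1-4), of x] assms(4,5)
  by (simp add: cocycleP_def)

lemma dichotomy_stable_decay:
  assumes "proj_family P" "compatible A P" "dichotomy_estimate A P N \<alpha> \<beta>" "1 \<le> p" "p \<le> n"
  shows "exp (\<alpha> * real i) * norm (cocycleP A P (n + i) p x)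
         \<le> N * exp (\<beta> * real n) * norm (cocycleP A P n p x)"
proof -
  define y where "y = cocycleP A P n p x"
  have Py: "P n y = y"
    using cocycleP_in_range[OF assms(1,2,4,5)] by (simp add: y_def)
  have Qy: "compl_fam P n y = 0"
    using compl_fam_proj_zero[OF assms(1), of n y] assms(4,5) Py by simp
  have "cocycleP A P (n + i) n y = cocycleP A P (n + i) p x"
    using cocycleP_trans[OF assms(1,2,4,5)] by (simp add: y_def)
  moreover note dichotomy_estimateD[OF assms(3), of n "n + i" y]
  ultimately show ?thesis
    using Py Qy assms(4,5) by (simp add: cocycleP_def y_def)
qed

lemma dichotomy_unstable_decay:
  assumes "proj_family P" "compatible A P" "dichotomy_estimate A P N \<alpha> \<beta>"
    and "1 \<le> n" "n \<le> k" "k \<le> m"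
  shows "exp (\<alpha> * (real m - real k)) * norm (cocycleP A (compl_fam P) k n x)
         \<le> N * exp (\<beta> * real m) * norm (cocycleP A (compl_fam P) m n x)"
proof -
  note Q_proj = proj_family_compl_fam[OF assms(1)] and Q_comp = compatible_compl_fam[OF assms(2)]
  define z where "z = cocycleP A (compl_fam P) k n x"
  have Qz: "compl_fam P k z = z"
    using cocycleP_in_range[OF Q_proj Q_comp assms(4,5)] by (simp add: z_def)
  have Pz: "P k z = 0"
    using compl_fam_proj_zero[OF Q_proj, of k z] assms(4,5) Qz by (simp add: compl_fam_compl_fam)
  have "cocycleP A (compl_fam P) m k z = cocycleP A (compl_fam P) m n x"
    using cocycleP_trans[OF Q_proj Q_comp assms(4-6)] by (simp add: z_def)
  then have "exp (\<alpha> * (real m - real k)) * (norm (cocycleP A P m k z) + norm z)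
      \<le> N * exp (\<beta> * real m) * norm (cocycleP A (compl_fam P) m n x)"
    using dichotomy_estimateD[OF assms(3) _ assms(6), of z] Qz Pz assms(4,5) by simp
  moreover have "exp (\<alpha> * (real m - real k)) * norm z
      \<le> exp (\<alpha> * (real m - real k)) * (norm (cocycleP A P m k z) + norm z)"
    by (intro mult_left_mono) auto
  ultimately show ?thesis
    unfolding z_def by linarith
qed

lemma exp_weight_shift:
  fixes \<alpha> d t a C :: real
  assumes "exp (\<alpha> * t) * a \<le> C"
  shows "exp (d * t) * a \<le> C * exp ((d - \<alpha>) * t)"
proof -
  have "exp (d * t) = exp ((d - \<alpha>) * t + \<alpha> * t)"
    by (simp add: algebra_simps)
  also have "\<dots> = exp ((d - \<alpha>) * t) * exp (\<alpha> * t)"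
    by (rule exp_add)
  finally have "exp (d * t) * a = exp ((d - \<alpha>) * t) * (exp (\<alpha> * t) * a)"
    by simp
  also have "\<dots> \<le> exp ((d - \<alpha>) * t) * C"
    using assms by (intro mult_left_mono) auto
  finally show ?thesis by (simp add: mult.commute)
qed

lemma sum_reversed_geometric_le:
  fixes r :: real
  assumes "0 \<le> r" "r < 1"
  shows "(\<Sum>k=n..m. r ^ (m - k)) \<le> 1 / (1 - r)"
proof -
  have "(\<Sum>k=n..m. r ^ (m - k)) \<le> (\<Sum>k=0..m. r ^ (m - k))"
    by (rule sum_mono2) (auto simp: assms)
  also have "\<dots> = (\<Sum>i=0..m. r ^ (m - (m + 0 - i)))"
    by (rule sum.atLeastAtMost_rev)
  also have "\<dots> = (\<Sum>i<Suc m. r ^ i)"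
    by (auto intro!: sum.cong simp: atLeast0AtMost lessThan_Suc_atMost)
  also have "\<dots> \<le> (\<Sum>i. r ^ i)"
    by (rule sum_le_suminf) (auto simp: assms summable_geometric)
  also have "\<dots> = 1 / (1 - r)"
    using suminf_geometric[of r] assms by simp
  finally show ?thesis .
qed

lemma geometric_majorant:
  fixes f :: "nat \<Rightarrow> real" and r :: real
  assumes "0 \<le> r" "r < 1" "\<And>i. 0 \<le> f i" "\<And>i. f i \<le> C * r ^ i"
  shows "summable f" and "suminf f \<le> C / (1 - r)"
proof -
  have geo: "summable (\<lambda>i. C * r ^ i)"
    using assms(1,2) by (intro summable_mult summable_geometric) simp
  show sf: "summable f"
    by (rule summable_comparison_test'[OF geo, of 0]) (use assms(3,4) in simp)
  have "suminf f \<le> (\<Sum>i. C * r ^ i)"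
    by (intro suminf_le sf geo assms(4))
  also have "\<dots> = C / (1 - r)"
    using assms(1,2) suminf_geometric[of r] by (simp add: suminf_mult)
  finally show "suminf f \<le> C / (1 - r)" .
qed

lemma summed_estimate_of_dichotomy_estimate:
  assumes "proj_family P" "compatible A P" "dichotomy_estimate A P N \<alpha> \<beta>"
    and "0 \<le> N" "d < \<alpha>"
  shows "summed_dichotomy_estimate A P (N / (1 - exp (d - \<alpha>))) d \<beta>"
  unfolding summed_dichotomy_estimate_def
proof (intro allI impI)
  fix m n p :: nat and x :: 'a assume "1 \<le> p \<and> p \<le> n \<and> n \<le> m"
  then have p: "1 \<le> p" "p \<le> n" and n: "1 \<le> n" "n \<le> m" by auto
  define r where "r = exp (d - \<alpha>)"
  have r: "0 \<le> r" "r < 1" using assms(5) by (auto simp: r_def)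
  have exp_r: "exp ((d - \<alpha>) * real j) = r ^ j" for j
    by (simp add: r_def mult.commute flip: exp_of_nat_mult)
  define C1 where "C1 = N * exp (\<beta> * real n) * norm (cocycleP A P n p x)"
  define C2 where "C2 = N * exp (\<beta> * real m) * norm (cocycleP A (compl_fam P) m n x)"
  have stable: "exp (d * real i) * norm (cocycleP A P (n + i) p x) \<le> C1 * r ^ i" for i
    using exp_weight_shift[OF dichotomy_stable_decay[OF assms(1-3) p, of i x], where d = d]
    by (simp add: C1_def exp_r)
  have unstable: "exp (d * (real m - real k)) * norm (cocycleP A (compl_fam P) k n x) \<le> C2 * r ^ (m - k)"
    if "k \<in> {n..m}" for k
    using that exp_weight_shift[OF dichotomy_unstable_decay[OF assms(1-3) n(1), of k m x], where d = d]
      exp_r[of "m - k"]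
    by (simp add: C2_def of_nat_diff)
  have "(\<Sum>k=n..m. exp (d * (real m - real k)) * norm (cocycleP A (compl_fam P) k n x))
      \<le> (\<Sum>k=n..m. C2 * r ^ (m - k))"
    by (rule sum_mono) (rule unstable)
  also have "\<dots> = C2 * (\<Sum>k=n..m. r ^ (m - k))"
    by (simp add: sum_distrib_left)
  also have "\<dots> \<le> C2 / (1 - r)"
    using mult_left_mono[OF sum_reversed_geometric_le[OF r, where n = n and m = m], of C2] assms(4)
    by (simp add: C2_def)
  finally have unstable_sum: "(\<Sum>k=n..m. exp (d * (real m - real k)) * norm (cocycleP A (compl_fam P) k n x))
      \<le> C2 / (1 - r)" .
  show "summable (\<lambda>i. exp (d * real i) * norm (cocycleP A P (n + i) p x)) \<and>
      (\<Sum>i. exp (d * real i) * norm (cocycleP A P (n + i) p x))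
      + (\<Sum>k=n..m. exp (d * (real m - real k)) * norm (cocycleP A (compl_fam P) k n x))
      \<le> N / (1 - exp (d - \<alpha>)) * (exp (\<beta> * real n) * norm (cocycleP A P n p x)
             + exp (\<beta> * real m) * norm (cocycleP A (compl_fam P) m n x))"
    using geometric_majorant[OF r _ stable] unstable_sum
    by (simp add: C1_def C2_def r_def add_divide_distrib algebra_simps)
qed

lemma dichotomy_estimate_of_summed_estimate:
  assumes "summed_dichotomy_estimate A P D d c"
  shows "dichotomy_estimate A P D d c"
  unfolding dichotomy_estimate_def
proof (intro allI impI)
  fix m n :: nat and x :: 'a assume n: "1 \<le> n \<and> n \<le> m"
  define f where "f = (\<lambda>i. exp (d * real i) * norm (cocycleP A P (n + i) n x))"
  define S where "S = (\<Sum>k=n..m. exp (d * (real m - real k)) * norm (cocycleP A (compl_fam P) k n x))"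
  have "summable f" and bound: "suminf f + S
      \<le> D * (exp (c * real n) * norm (P n x) + exp (c * real m) * norm (cocycleP A (compl_fam P) m n x))"
    using assms[unfolded summed_dichotomy_estimate_def, rule_format, of n n m x] n
    by (simp_all add: f_def S_def cocycleP_self)
  have "sum f {m - n} \<le> suminf f"
    using \<open>summable f\<close> by (intro sum_le_suminf) (auto simp: f_def)
  moreover have "exp (d * (real m - real n)) * norm (cocycleP A (compl_fam P) n n x) \<le> S"
    unfolding S_def using n by (intro member_le_sum) auto
  ultimately show "exp (d * (real m - real n)) * (norm (cocycleP A P m n x) + norm (compl_fam P n x))
      \<le> D * (exp (c * real n) * norm (P n x) + exp (c * real m) * norm (cocycleP A (compl_fam P) m n x))"
    using bound n by (simp add: f_def cocycleP_self of_nat_diff algebra_simps)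
qed

theorem mainTheorem4:
  fixes A P :: "nat \<Rightarrow> 'a::banach \<Rightarrow>\<^sub>L 'a"
  assumes "proj_family P"
    and "compatible A P"
  shows "P_exp_dichotomic A P \<longleftrightarrow>
    (\<exists>D d c::real. D \<ge> 1 \<and> d > 0 \<and> c \<ge> 0 \<and>
      (\<forall>m n p x. 1 \<le> p \<and> p \<le> n \<and> n \<le> m \<longrightarrow>
         summable (\<lambda>i. exp (d * real i) * norm (cocycleP A P (n + i) p x)) \<and>
         (\<Sum>i. exp (d * real i) * norm (cocycleP A P (n + i) p x))
         + (\<Sum>k=n..m. exp (d * (real m - real k)) * norm (cocycleP A (compl_fam P) k n x))
         \<le> D * (exp (c * real n) * norm (cocycleP A P n p x)
                + exp (c * real m) * norm (cocycleP A (compl_fam P) m n x))))"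
  unfolding P_exp_dichotomic_def
  unfolding dichotomy_estimate_def[symmetric] summed_dichotomy_estimate_def[symmetric]
proof
  assume "\<exists>N \<alpha> \<beta>. N \<ge> 1 \<and> \<alpha> > 0 \<and> \<beta> \<ge> 0 \<and> dichotomy_estimate A P N \<alpha> \<beta>"
  then obtain N \<alpha> \<beta> where N: "N \<ge> 1" and \<alpha>: "\<alpha> > 0" and "\<beta> \<ge> 0"
    and dich: "dichotomy_estimate A P N \<alpha> \<beta>" by blast
  define D where "D = N / (1 - exp (\<alpha> / 2 - \<alpha>))"
  have "1 \<le> D"
    using N \<alpha> by (simp add: D_def le_divide_eq) (smt (verit) exp_gt_zero)
  moreover have "summed_dichotomy_estimate A P D (\<alpha> / 2) \<beta>"
    unfolding D_def using summed_estimate_of_dichotomy_estimate[OF assms dich, where d = "\<alpha> / 2"] N \<alpha>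
    by simp
  ultimately show "\<exists>D d c. D \<ge> 1 \<and> d > 0 \<and> c \<ge> 0 \<and> summed_dichotomy_estimate A P D d c"
    using \<alpha> \<open>\<beta> \<ge> 0\<close> by (intro exI[of _ D] exI[of _ "\<alpha> / 2"] exI[of _ \<beta>]) auto
qed (blast intro: dichotomy_estimate_of_summed_estimate)

end
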